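(* For any integers $n\ge g\ge1$, $\Delta\big(\tfrac{R(g,n)}{n}\big)\le\tfrac gn$.
   Context: A set $S$ of integers is a $B^*[g]$ set if for every integer $m$ there are at most $g$ ordered pairs $(s_1,s_2)\in S\times S$ with $s_1+s_2=m$. $R(g,n)$ is the maximum cardinality of a $B^*[g]$ set contained in $\{1,2,\dots,n\}$. Let $\lambda$ be Lebesgue measure; a set $C\subseteq\mathbb{R}$ is symmetric if there is $c$ with $c+x\in C\iff c-x\in C$; $D(A):=\sup\{\lambda(C): C\subseteq A \text{ measurable and symmetric}\}$, and $\Delta(\varepsilon):=\inf\{D(A): A\subseteq[0,1) \text{ measurable},\ \lambda(A)=\varepsilon\}$ for $0\le\varepsilon\le1$. *)

theory Defs
  imports "HOL-Analysis.Analysis"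
begin

definition Bstar :: "nat \<Rightarrow> int set \<Rightarrow> bool" where
  "Bstar g S \<longleftrightarrow>
     (\<forall>m::int. finite {p \<in> S \<times> S. fst p + snd p = m} \<and>
               card {p \<in> S \<times> S. fst p + snd p = m} \<le> g)"

definition R :: "nat \<Rightarrow> nat \<Rightarrow> nat" where
  "R g n = Max {card S | S. S \<subseteq> {1..int n} \<and> Bstar g S}"

definition symmetric_set :: "real set \<Rightarrow> bool" where
  "symmetric_set C \<longleftrightarrow> (\<exists>c. \<forall>x. c + x \<in> C \<longleftrightarrow> c - x \<in> C)"

definition D :: "real set \<Rightarrow> real" where
  "D A = Sup {measure lebesgue C | C. C \<subseteq> A \<and> C \<in> sets lebesgue \<and> symmetric_set C}"

definition Delta :: "real \<Rightarrow> real" where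
  "Delta \<epsilon> = Inf {D A | A. A \<subseteq> {0..<1} \<and> A \<in> sets lebesgue \<and> measure lebesgue A = \<epsilon>}"

end

theory Submission
  imports Defs
begin

text \<open>Take a \<open>B\<^sup>*[g]\<close> set \<open>S \<subseteq> {1..n}\<close> of size \<open>R(g,n)\<close> and let \<open>A\<close> be the union of the cells
  \<open>[(s-1)/n, s/n)\<close>, \<open>s \<in> S\<close>, so \<open>\<lambda>(A) = R(g,n)/n\<close>. Let \<open>C \<subseteq> A\<close> be symmetric about \<open>c\<close> and put
  \<open>a = \<lfloor>2cn\<rfloor> + 1\<close>, \<open>d = a - 2cn \<in> (0,1]\<close>. A point of \<open>C\<close> in the cell of \<open>s\<close> is mirrored into the
  cell of some \<open>t \<in> S\<close>, and necessarily \<open>s + t \<in> {a, a + 1}\<close>; the case \<open>s + t = a\<close> confines the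
  point to the last \<open>d/n\<close> of its cell, the case \<open>s + t = a + 1\<close> to the first \<open>(1 - d)/n\<close>. Each of
  \<open>a\<close> and \<open>a + 1\<close> has at most \<open>g\<close> representations \<open>s + t\<close> with \<open>s, t \<in> S\<close>, hence
  \<open>\<lambda>(C) \<le> g d/n + g (1 - d)/n = g/n\<close>.\<close>

lemma Bstar_card_representations:
  assumes "Bstar g S"
  shows "finite {s \<in> S. m - s \<in> S}" "card {s \<in> S. m - s \<in> S} \<le> g"
proof -
  let ?P = "{p \<in> S \<times> S. fst p + snd p = m}"
  have P: "finite ?P" "card ?P \<le> g"
    using assms unfolding Bstar_def by auto
  have P_eq: "?P = (\<lambda>s. (s, m - s)) ` {s \<in> S. m - s \<in> S}"
    by force
  have inj: "inj_on (\<lambda>s. (s, m - s)) {s \<in> S. m - s \<in> S}"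
    by (rule inj_onI) simp
  show "finite {s \<in> S. m - s \<in> S}"
    using P(1) unfolding P_eq by (rule finite_imageD[OF _ inj])
  show "card {s \<in> S. m - s \<in> S} \<le> g"
    using P(2) unfolding P_eq card_image[OF inj] .
qed

lemma R_attained: "\<exists>S. S \<subseteq> {1..int n} \<and> Bstar g S \<and> card S = R g n"
proof -
  let ?K = "{card S | S. S \<subseteq> {1..int n} \<and> Bstar g S}"
  have "finite ?K"
    by (rule finite_subset[of _ "card ` Pow {1..int n}"]) auto
  moreover have "Bstar g {}"
    unfolding Bstar_def by simp
  then have "?K \<noteq> {}"
    by blast
  ultimately have "Max ?K \<in> ?K"
    by (rule Max_in)
  then show ?thesis
    unfolding R_def by auto
qed

lemma measure_UNION_le_card:
  fixes b :: real
  assumes "finite I" "\<And>i. i \<in> I \<Longrightarrow> F i \<in> sets M" "\<And>i. i \<in> I \<Longrightarrow> measure M (F i) \<le> b"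
  shows "measure M (\<Union>i\<in>I. F i) \<le> card I * b"
  using measure_UNION_le[of I F M] sum_bounded_above[of I "\<lambda>i. measure M (F i)" b] assms
  by simp

lemma mem_scaled_interval_iff:
  fixes n :: nat and x a b :: real
  assumes "n > 0"
  shows "x \<in> {a / n ..< b / n} \<longleftrightarrow> a \<le> n * x \<and> n * x < b"
    and "x \<in> {a / n .. b / n} \<longleftrightarrow> a \<le> n * x \<and> n * x \<le> b"
  using assms by (auto simp: field_simps)

lemma measure_scaled_interval:
  fixes n :: nat and a b :: real
  assumes "n > 0" "a \<le> b"
  shows "measure lebesgue {a / n ..< b / n} = (b - a) / n"
    and "measure lebesgue {a / n .. b / n} = (b - a) / n"
  using assms by (simp_all add: divide_right_mono diff_divide_distrib)

definition cell :: "nat \<Rightarrow> int \<Rightarrow> real set" where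
  "cell n s = {(of_int s - 1) / n ..< of_int s / n}"

lemma mem_cell_iff:
  "n > 0 \<Longrightarrow> x \<in> cell n s \<longleftrightarrow> of_int s - 1 \<le> n * x \<and> n * x < of_int s"
  unfolding cell_def by (rule mem_scaled_interval_iff)

lemma lmeasurable_cell: "cell n s \<in> lmeasurable"
  unfolding cell_def
  by (rule fmeasurableI2[OF lmeasurable_interval(1)[of "(of_int s - 1) / n" "of_int s / n"]]) auto

lemma measure_cell: "n > 0 \<Longrightarrow> measure lebesgue (cell n s) = 1 / n"
  unfolding cell_def using measure_scaled_interval(1)[of n "of_int s - 1" "of_int s"] by simp

lemma disjoint_family_cell:
  assumes "n > 0"
  shows "disjoint_family (cell n)"
  unfolding disjoint_family_on_def
proof (intro ballI impI)
  fix s t :: int assume "s \<noteq> t"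
  have "s = t" if "x \<in> cell n s" "x \<in> cell n t" for x
  proof -
    have "of_int s - 1 \<le> n * x" "n * x < of_int s" "of_int t - 1 \<le> n * x" "n * x < of_int t"
      using that mem_cell_iff[OF assms] by auto
    then have "s - 1 < t" "t - 1 < s"
      by linarith+
    then show "s = t"
      by linarith
  qed
  then show "cell n s \<inter> cell n t = {}"
    using \<open>s \<noteq> t\<close> by blast
qed

lemma cell_subset_unit_interval:
  assumes "n > 0" "1 \<le> s" "s \<le> int n"
  shows "cell n s \<subseteq> {0..<1}"
proof
  fix x assume "x \<in> cell n s"
  then have "of_int s - 1 \<le> n * x" "n * x < of_int s"
    using mem_cell_iff[OF assms(1)] by auto
  moreover have "1 \<le> real_of_int s" "real_of_int s \<le> n"
    using assms(2,3) by linarith+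
  ultimately have "0 \<le> n * x" "n * x < n * 1"
    by linarith+
  then show "x \<in> {0..<1}"
    using assms(1) by (simp add: zero_le_mult_iff)
qed

lemma measure_cells:
  assumes "n > 0" "finite S"
  shows "measure lebesgue (\<Union>s\<in>S. cell n s) = card S / n"
proof -
  have "measure lebesgue (\<Union>s\<in>S. cell n s) = (\<Sum>s\<in>S. measure lebesgue (cell n s))"
  proof (rule measure_finite_Union[OF assms(2)])
    show "disjoint_family_on (cell n) S"
      using disjoint_family_cell[OF assms(1)] by (rule disjoint_family_on_mono[rotated]) simp
    show "cell n ` S \<subseteq> sets lebesgue"
      using lmeasurable_cell by blast
    show "emeasure lebesgue (cell n s) \<noteq> \<infinity>" for s
      using fmeasurableD2[OF lmeasurable_cell] by simp
  qed
  then show ?thesis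
    using assms by (simp add: measure_cell)
qed

text \<open>The reflection step in units of \<open>1/n\<close>: \<open>y = nx\<close> and \<open>u = 2cn\<close>, so \<open>u - y\<close> is the mirror image.\<close>

lemma reflected_cells:
  fixes u y :: real and s t :: int
  defines "a \<equiv> \<lfloor>u\<rfloor> + 1"
  defines "d \<equiv> of_int a - u"
  assumes "of_int s - 1 \<le> y" "y < of_int s" "of_int t - 1 \<le> u - y" "u - y < of_int t"
  shows "s + t = a \<and> of_int s - d \<le> y \<or> s + t = a + 1 \<and> y \<le> of_int s - d"
proof (cases "of_int (s + t) - 1 \<le> u")
  case True
  then have "\<lfloor>u\<rfloor> = s + t - 1"
    using assms(3-6) by (intro floor_unique) auto
  then show ?thesis
    using assms(6) unfolding a_def d_def by auto
next
  case False
  then have "\<lfloor>u\<rfloor> = s + t - 2"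
    using assms(3-6) by (intro floor_unique) auto
  then show ?thesis
    using assms(5) unfolding a_def d_def by auto
qed

lemma measure_symmetric_subset_cells:
  assumes "n > 0" "Bstar g S" "C \<subseteq> (\<Union>s\<in>S. cell n s)" "C \<in> sets lebesgue" "symmetric_set C"
  shows "measure lebesgue C \<le> g / n"
proof -
  obtain c where c: "\<And>x. c + x \<in> C \<longleftrightarrow> c - x \<in> C"
    using assms(5) unfolding symmetric_set_def by blast
  define u where "u = 2 * c * n"
  define a where "a = \<lfloor>u\<rfloor> + 1"
  define d where "d = of_int a - u"
  have d: "0 < d" "d \<le> 1"
    unfolding d_def a_def by linarith+
  define P where "P k = {s \<in> S. k - s \<in> S}" for k
  define J1 where "J1 s = {(of_int s - d) / n .. of_int s / n}" for s :: int
  define J2 where "J2 s = {(of_int s - 1) / n .. (of_int s - d) / n}" for s :: int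
  have cover: "C \<subseteq> (\<Union>s\<in>P a. J1 s) \<union> (\<Union>s\<in>P (a + 1). J2 s)"
  proof
    fix x assume "x \<in> C"
    then obtain s where s: "s \<in> S" "x \<in> cell n s"
      using assms(3) by blast
    have "2 * c - x \<in> C"
      using c[of "x - c"] \<open>x \<in> C\<close> by (simp add: algebra_simps)
    then obtain t where t: "t \<in> S" "2 * c - x \<in> cell n t"
      using assms(3) by blast
    have "n * (2 * c - x) = u - n * x"
      unfolding u_def by (simp add: algebra_simps)
    then have "of_int s - 1 \<le> n * x" "n * x < of_int s"
      "of_int t - 1 \<le> u - n * x" "u - n * x < of_int t"
      using s(2) t(2) mem_cell_iff[OF assms(1)] by auto
    then have "s + t = a \<and> of_int s - d \<le> n * x \<or> s + t = a + 1 \<and> n * x \<le> of_int s - d"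
      unfolding a_def d_def by (rule reflected_cells)
    then show "x \<in> (\<Union>s\<in>P a. J1 s) \<union> (\<Union>s\<in>P (a + 1). J2 s)"
    proof
      assume "s + t = a \<and> of_int s - d \<le> n * x"
      then have "s \<in> P a" "x \<in> J1 s"
        using s t \<open>n * x < of_int s\<close> unfolding P_def J1_def mem_scaled_interval_iff[OF assms(1)]
        by auto
      then show ?thesis
        by blast
    next
      assume *: "s + t = a + 1 \<and> n * x \<le> of_int s - d"
      then have "a + 1 - s = t"
        by linarith
      with * have "s \<in> P (a + 1)" "x \<in> J2 s"
        using s t \<open>of_int s - 1 \<le> n * x\<close> unfolding P_def J2_def mem_scaled_interval_iff[OF assms(1)]
        by auto
      then show ?thesis
        by blast
    qed
  qed
  have P: "finite (P k)" "card (P k) \<le> g" for k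
    unfolding P_def using Bstar_card_representations[OF assms(2)] by auto
  have J: "J1 s \<in> lmeasurable" "J2 s \<in> lmeasurable"
    "measure lebesgue (J1 s) = d / n" "measure lebesgue (J2 s) = (1 - d) / n" for s
    unfolding J1_def J2_def using d measure_scaled_interval(2)[OF assms(1)] by auto
  have "measure lebesgue C \<le> measure lebesgue ((\<Union>s\<in>P a. J1 s) \<union> (\<Union>s\<in>P (a + 1). J2 s))"
    using cover assms(4) P(1) J by (intro measure_mono_fmeasurable fmeasurable.Un fmeasurable.finite_UN) auto
  also have "\<dots> \<le> measure lebesgue (\<Union>s\<in>P a. J1 s) + measure lebesgue (\<Union>s\<in>P (a + 1). J2 s)"
    using P(1) J by (intro measure_Un_le sets.finite_UN) auto
  also have "\<dots> \<le> card (P a) * (d / n) + card (P (a + 1)) * ((1 - d) / n)"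
    using P(1) J by (intro add_mono measure_UNION_le_card) auto
  also have "\<dots> \<le> g * (d / n) + g * ((1 - d) / n)"
    using P(2) d by (intro add_mono mult_right_mono) auto
  also have "\<dots> = g / n"
    using assms(1) by (simp add: field_simps)
  finally show ?thesis .
qed

lemma symmetric_set_empty: "symmetric_set {}"
  unfolding symmetric_set_def by simp

lemma D_le:
  assumes "\<And>C. C \<subseteq> A \<Longrightarrow> C \<in> sets lebesgue \<Longrightarrow> symmetric_set C \<Longrightarrow> measure lebesgue C \<le> b"
  shows "D A \<le> b"
  unfolding D_def using assms symmetric_set_empty by (intro cSup_least) auto

lemma D_nonneg:
  assumes "A \<subseteq> B" "B \<in> lmeasurable"
  shows "0 \<le> D A"
  unfolding D_def
proof (rule cSup_upper)
  show "0 \<in> {measure lebesgue C | C. C \<subseteq> A \<and> C \<in> sets lebesgue \<and> symmetric_set C}"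
    using symmetric_set_empty by force
  show "bdd_above {measure lebesgue C | C. C \<subseteq> A \<and> C \<in> sets lebesgue \<and> symmetric_set C}"
    using assms by (intro bdd_aboveI[of _ "measure lebesgue B"]) (auto intro: measure_mono_fmeasurable)
qed

lemma Delta_le_D:
  assumes "A \<subseteq> {0..<1}" "A \<in> sets lebesgue" "measure lebesgue A = \<epsilon>"
  shows "Delta \<epsilon> \<le> D A"
  unfolding Delta_def
proof (rule cInf_lower)
  show "D A \<in> {D A | A. A \<subseteq> {0..<1} \<and> A \<in> sets lebesgue \<and> measure lebesgue A = \<epsilon>}"
    using assms by blast
  have "{0..<1::real} \<in> lmeasurable"
    by (rule fmeasurableI2[OF lmeasurable_interval(1)[of 0 1]]) auto
  then show "bdd_below {D A | A. A \<subseteq> {0..<1} \<and> A \<in> sets lebesgue \<and> measure lebesgue A = \<epsilon>}"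
    by (intro bdd_belowI[of _ 0]) (auto intro: D_nonneg)
qed

theorem proposition3p1:
  fixes g n :: nat
  assumes "1 \<le> g" and "g \<le> n"
  shows "Delta (real (R g n) / real n) \<le> real g / real n"
proof -
  have n: "n > 0"
    using assms by simp
  obtain S where S: "S \<subseteq> {1..int n}" "Bstar g S" "card S = R g n"
    using R_attained by blast
  have "finite S"
    using S(1) finite_subset by blast
  define A where "A = (\<Union>s\<in>S. cell n s)"
  have "A \<subseteq> {0..<1}"
    unfolding A_def using S(1) cell_subset_unit_interval[OF n] by fastforce
  moreover have "A \<in> sets lebesgue"
    unfolding A_def using \<open>finite S\<close> lmeasurable_cell by blast
  moreover have "measure lebesgue A = R g n / n"
    unfolding A_def using measure_cells[OF n \<open>finite S\<close>] S(3) by simp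
  ultimately have "Delta (R g n / n) \<le> D A"
    by (rule Delta_le_D)
  also have "D A \<le> g / n"
    using measure_symmetric_subset_cells[OF n S(2)] unfolding A_def by (intro D_le) auto
  finally show ?thesis .
qed

end
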